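(* Let $r\in\mathbb R$ and $\lambda\in\mathbb O$ with $r^2+|\lambda|^2=1$. The map $\mathcal R_{r,\lambda}:U_1/_\sim\to U_1/_\sim$, $[1,u,v]\mapsto[1,\ ru+\lambda v,\ \bar\lambda u-rv]$, is an isometry of $U_1/_\sim\subset\mathbb OP^2$ with the metric $g$.
   Context: Octonions: $\mathbb O=\mathbb H\oplus\mathbb H$ with product $(q_1,q_2)(p_1,p_2)=(q_1p_1-\bar p_2q_2,\ p_2q_1+q_2\bar p_1)$, conjugation $\overline{(q_1,q_2)}=(\bar q_1,-q_2)$, $\mathrm{Re}$ the real part, $\langle a,b\rangle=\mathrm{Re}(a\bar b)$, $|a|^2=\langle a,a\rangle$. $\mathbb OP^2=\mathcal U/_\sim$ with $\mathcal U=(\{1\}\times\mathbb O^2)\cup(\mathbb O\times\{1\}\times\mathbb O)\cup(\mathbb O^2\times\{1\})$ and $[a,b,c]\sim[d,e,f]$ iff $(a,b,c)=(d\lambda,e\lambda,f\lambda)$ for some $\lambda\in\mathbb O\setminus\{0\}$; $U_1/_\sim=\{[1,u,v]\}$ is identified with $\mathbb O^2$ via $(u,v)$. The metric $g$ on this chart is the one with quadratic form, for tangent vector $(du,dv)=(\xi,\eta)$, $ds^2=\frac{|\xi|^2(1+|v|^2)+|\eta|^2(1+|u|^2)-2\mathrm{Re}[(u\bar v)(\eta\bar\xi)]}{(1+|u|^2+|v|^2)^2}$ (and the same formula in the other two charts $[u,1,v]\mapsto(u,v)$, $[u,v,1]\mapsto(u,v)$). *)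

theory Defs
  imports "HOL-Analysis.Analysis"
begin

text \<open>Quaternions a + b i + c j + d k as 4-tuples of reals (a Euclidean space via the
product-type instances), octonions as pairs of quaternions (Cayley--Dickson).\<close>

type_synonym quat = "real \<times> real \<times> real \<times> real"
type_synonym oct = "quat \<times> quat"

fun qmul :: "quat \<Rightarrow> quat \<Rightarrow> quat" where
  "qmul (a1, b1, c1, d1) (a2, b2, c2, d2) =
     (a1*a2 - b1*b2 - c1*c2 - d1*d2,
      a1*b2 + b1*a2 + c1*d2 - d1*c2,
      a1*c2 - b1*d2 + c1*a2 + d1*b2,
      a1*d2 + b1*c2 - c1*b2 + d1*a2)"

fun qconj :: "quat \<Rightarrow> quat" where
  "qconj (a, b, c, d) = (a, -b, -c, -d)"

fun omul :: "oct \<Rightarrow> oct \<Rightarrow> oct" where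
  "omul (q1, q2) (p1, p2) = (qmul q1 p1 - qmul (qconj p2) q2, qmul p2 q1 + qmul q2 (qconj p1))"

fun oconj :: "oct \<Rightarrow> oct" where
  "oconj (q1, q2) = (qconj q1, - q2)"

definition ore :: "oct \<Rightarrow> real" where
  "ore a = fst (fst a)"

definition onorm2 :: "oct \<Rightarrow> real" where
  "onorm2 a = ore (omul a (oconj a))"

text \<open>The metric g on the chart U_1 = {[1,u,v]} identified with O^2:
 quadratic form at the point (u,v) evaluated on the tangent vector (xi,eta).\<close>
definition ds2 :: "oct \<times> oct \<Rightarrow> oct \<times> oct \<Rightarrow> real" where
  "ds2 p w = (let (u, v) = p; (\<xi>, \<eta>) = w in
     (onorm2 \<xi> * (1 + onorm2 v) + onorm2 \<eta> * (1 + onorm2 u)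
       - 2 * ore (omul (omul u (oconj v)) (omul \<eta> (oconj \<xi>))))
     / (1 + onorm2 u + onorm2 v)^2)"

definition Rmap :: "real \<Rightarrow> oct \<Rightarrow> oct \<times> oct \<Rightarrow> oct \<times> oct" where
  "Rmap r l p = (let (u, v) = p in
     (r *\<^sub>R u + omul l v, omul (oconj l) u - r *\<^sub>R v))"

definition isometry_g :: "(oct \<times> oct \<Rightarrow> oct \<times> oct) \<Rightarrow> bool" where
  "isometry_g F \<longleftrightarrow> bij F \<and> (\<forall>p. F differentiable (at p)) \<and> (\<forall>p. inv F differentiable (at p))
     \<and> (\<forall>p w. ds2 (F p) (frechet_derivative F (at p) w) = ds2 p w)"

end

theory Submission
  imports Defs
begin

text \<open>Write (u', v') = R(u, v) and s = r^2 + |l|^2. The map R is real-linear with R o R = s id, so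
for s = 1 it is an involution and its own differential. Because |l v| = |l| |v| and
<conj(l) u, v> = <u, l v>, the squared norms |u'|^2 = r^2 |u|^2 + |l|^2 |v|^2 + 2 r <l v, u> and
|v'|^2 = |l|^2 |u|^2 + r^2 |v|^2 - 2 r <l v, u> add up to s (|u|^2 + |v|^2), so the denominator of g
is invariant. The cross term Re((u conj v)(eta conj xi)) is the inner product <u conj v, xi conj eta>,
and the Moufang identities give u' conj v' = a l - s u conj v with the real number
a = r (|u|^2 - |v|^2) + 2 <l v, u>.\<close>

lemma oct_induct: "(\<And>a b c d e f g h. P ((a, b, c, d), (e, f, g, h))) \<Longrightarrow> P x"
  by (metis prod.exhaust)

lemma ore_omul_oconj: "ore (omul x (oconj y)) = x \<bullet> y"
  by (induct x rule: oct_induct, induct y rule: oct_induct) (simp add: ore_def)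

lemma onorm2_eq_inner: "onorm2 x = x \<bullet> x"
  by (simp add: onorm2_def ore_omul_oconj)

lemma oconj_oconj [simp]: "oconj (oconj x) = x"
  by (induct x rule: oct_induct) simp

lemma ore_omul: "ore (omul x y) = x \<bullet> oconj y"
  by (metis oconj_oconj ore_omul_oconj)

lemma oconj_omul: "oconj (omul x y) = omul (oconj y) (oconj x)"
  by (induct x rule: oct_induct, induct y rule: oct_induct) (simp add: algebra_simps)

lemma inner_oconj [simp]: "oconj x \<bullet> oconj y = x \<bullet> y"
  by (induct x rule: oct_induct, induct y rule: oct_induct) simp

lemma linear_oconj: "linear oconj"
proof (rule linearI)
  fix x y :: oct and c :: real
  show "oconj (x + y) = oconj x + oconj y" "oconj (c *\<^sub>R x) = c *\<^sub>R oconj x"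
    by (induct x rule: oct_induct, induct y rule: oct_induct; simp)+
qed

lemma bilinear_omul: "bilinear omul"
  unfolding bilinear_def
proof (intro allI conjI linearI)
  fix x y z :: oct and c :: real
  show "omul x (y + z) = omul x y + omul x z" "omul (y + z) x = omul y x + omul z x"
       "omul x (c *\<^sub>R y) = c *\<^sub>R omul x y" "omul (c *\<^sub>R y) x = c *\<^sub>R omul y x"
    by (induct x rule: oct_induct, induct y rule: oct_induct, induct z rule: oct_induct;
        simp add: algebra_simps)+
qed

interpretation omul: bounded_bilinear omul
  using bilinear_omul bilinear_conv_bounded_bilinear by blast

lemma inner_omul_self: "omul x y \<bullet> omul x y = (x \<bullet> x) * (y \<bullet> y)"
  by (induct x rule: oct_induct, induct y rule: oct_induct) (simp, algebra)

lemma inner_omul_oconj_left: "omul (oconj l) u \<bullet> v = u \<bullet> omul l v"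
  by (induct l rule: oct_induct, induct u rule: oct_induct, induct v rule: oct_induct)
    (simp add: algebra_simps)

lemma omul_omul_oconj_left: "omul l (omul (oconj l) u) = (l \<bullet> l) *\<^sub>R u"
  by (induct l rule: oct_induct, induct u rule: oct_induct) (simp, algebra)

lemma omul_oconj_omul_left: "omul (oconj l) (omul l u) = (l \<bullet> l) *\<^sub>R u"
  using omul_omul_oconj_left[of "oconj l"] by simp

lemma omul_omul_oconj_right: "omul (omul x v) (oconj v) = (v \<bullet> v) *\<^sub>R x"
  by (induct x rule: oct_induct, induct v rule: oct_induct) (simp, algebra)

text \<open>By Moufang, (l v)(conj u l) = l (v conj u) l, and l c l = 2 <l, conj c> l - |l|^2 conj c.\<close>

lemma moufang_omul_oconj:
  "omul (omul l v) (omul (oconj u) l) = (2 * (omul l v \<bullet> u)) *\<^sub>R l - (l \<bullet> l) *\<^sub>R omul u (oconj v)"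
  by (induct l rule: oct_induct, induct u rule: oct_induct, induct v rule: oct_induct)
    (simp, algebra)

lemma inner_omul_oconj_right: "omul x (oconj y) \<bullet> z = omul z y \<bullet> x"
  by (induct x rule: oct_induct, induct y rule: oct_induct, induct z rule: oct_induct)
    (simp add: algebra_simps)

lemma ds2_Pair:
  "ds2 (u, v) (\<xi>, \<eta>) =
     (\<xi> \<bullet> \<xi> * (1 + v \<bullet> v) + \<eta> \<bullet> \<eta> * (1 + u \<bullet> u) - 2 * (omul u (oconj v) \<bullet> omul \<xi> (oconj \<eta>)))
     / (1 + u \<bullet> u + v \<bullet> v)\<^sup>2"
  by (simp add: ds2_def onorm2_eq_inner ore_omul oconj_omul)

lemma Rmap_Pair: "Rmap r l (u, v) = (r *\<^sub>R u + omul l v, omul (oconj l) u - r *\<^sub>R v)"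
  by (simp add: Rmap_def)

lemma linear_Rmap: "linear (Rmap r l)"
proof (rule linearI)
  fix p q :: "oct \<times> oct" and c :: real
  obtain u v u' v' where "p = (u, v)" "q = (u', v')"
    by (metis prod.exhaust)
  then show "Rmap r l (p + q) = Rmap r l p + Rmap r l q" "Rmap r l (c *\<^sub>R p) = c *\<^sub>R Rmap r l p"
    by (simp_all add: Rmap_Pair omul.add_right omul.scaleR_right algebra_simps)
qed

lemma Rmap_Rmap: "Rmap r l (Rmap r l p) = (r\<^sup>2 + l \<bullet> l) *\<^sub>R p"
  by (cases p rule: prod.exhaust)
    (simp add: Rmap_Pair omul.add_right omul.diff_right omul.scaleR_right omul_omul_oconj_left omul_oconj_omul_left algebra_simps power2_eq_square)

lemma inner_self_Rmap_fst:
  "(r *\<^sub>R u + omul l v) \<bullet> (r *\<^sub>R u + omul l v)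
     = r\<^sup>2 * (u \<bullet> u) + (l \<bullet> l) * (v \<bullet> v) + 2 * r * (omul l v \<bullet> u)"
  by (simp add: inner_omul_self inner_commute algebra_simps power2_eq_square)

lemma inner_self_Rmap_snd:
  "(omul (oconj l) u - r *\<^sub>R v) \<bullet> (omul (oconj l) u - r *\<^sub>R v)
     = (l \<bullet> l) * (u \<bullet> u) + r\<^sup>2 * (v \<bullet> v) - 2 * r * (omul l v \<bullet> u)"
  using inner_omul_oconj_left[of l u v]
  by (simp add: inner_omul_self inner_commute algebra_simps power2_eq_square)

lemma omul_oconj_Rmap:
  "omul (r *\<^sub>R u + omul l v) (oconj (omul (oconj l) u - r *\<^sub>R v))
     = (r * (u \<bullet> u - v \<bullet> v) + 2 * (omul l v \<bullet> u)) *\<^sub>R l - (r\<^sup>2 + l \<bullet> l) *\<^sub>R omul u (oconj v)"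
  by (simp add: linear_diff[OF linear_oconj] linear_scale[OF linear_oconj] oconj_omul
      omul.add_left omul.diff_right omul.scaleR_left omul.scaleR_right
      omul_omul_oconj_left omul_omul_oconj_right moufang_omul_oconj algebra_simps power2_eq_square)

lemma ds2_Rmap:
  assumes unit: "r\<^sup>2 + l \<bullet> l = 1"
  shows "ds2 (Rmap r l p) (Rmap r l w) = ds2 p w"
proof -
  obtain u v \<xi> \<eta> where p: "p = (u, v)" and w: "w = (\<xi>, \<eta>)"
    by (metis prod.exhaust)
  define \<alpha> \<beta> where "\<alpha> = omul l v \<bullet> u" and "\<beta> = omul l \<eta> \<bullet> \<xi>"
  define a b where "a = r * (u \<bullet> u - v \<bullet> v) + 2 * \<alpha>" and "b = r * (\<xi> \<bullet> \<xi> - \<eta> \<bullet> \<eta>) + 2 * \<beta>"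
  define P Q where "P = omul u (oconj v)" and "Q = omul \<xi> (oconj \<eta>)"
  have "P \<bullet> l = \<alpha>" "Q \<bullet> l = \<beta>"
    unfolding P_def Q_def \<alpha>_def \<beta>_def by (simp_all add: inner_omul_oconj_right)
  have "omul (r *\<^sub>R u + omul l v) (oconj (omul (oconj l) u - r *\<^sub>R v))
      \<bullet> omul (r *\<^sub>R \<xi> + omul l \<eta>) (oconj (omul (oconj l) \<xi> - r *\<^sub>R \<eta>))
    = (a *\<^sub>R l - P) \<bullet> (b *\<^sub>R l - Q)" (is "?cross = _")
    unfolding omul_oconj_Rmap unit a_def b_def \<alpha>_def \<beta>_def P_def Q_def by simp
  also have "\<dots> = a * b * (l \<bullet> l) - a * \<beta> - b * \<alpha> + P \<bullet> Q"
    using \<open>P \<bullet> l = \<alpha>\<close> \<open>Q \<bullet> l = \<beta>\<close>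
    by (simp add: inner_diff_left inner_diff_right inner_commute[of l Q] algebra_simps)
  finally have cross: "?cross = a * b * (l \<bullet> l) - a * \<beta> - b * \<alpha> + P \<bullet> Q" .
  show ?thesis
    unfolding p w Rmap_Pair ds2_Pair inner_self_Rmap_fst inner_self_Rmap_snd cross
    unfolding \<alpha>_def [symmetric] \<beta>_def [symmetric] P_def [symmetric] Q_def [symmetric]
    unfolding a_def b_def
    by (rule arg_cong2[where f = "(/)"]; use unit in algebra)
qed

lemma isometry_g_linear:
  assumes lin: "linear F" and "bij F" and ds2: "\<And>p w. ds2 (F p) (F w) = ds2 p w"
  shows "isometry_g F"
proof -
  have "linear (inv F)"
    using lin \<open>bij F\<close> bij_is_inj inj_linear_imp_inv_linear by blast
  moreover have "frechet_derivative F (at p) = F" for p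
    using lin linear_imp_has_derivative frechet_derivative_at by metis
  ultimately show ?thesis
    unfolding isometry_g_def using lin \<open>bij F\<close> ds2 linear_imp_differentiable by metis
qed

theorem proposition4p1:
  fixes r :: real and l :: oct
  assumes "r^2 + onorm2 l = 1"
  shows "isometry_g (Rmap r l)"
proof (rule isometry_g_linear)
  have unit: "r\<^sup>2 + l \<bullet> l = 1"
    using assms by (simp add: onorm2_eq_inner)
  then have "Rmap r l (Rmap r l p) = p" for p
    by (simp add: Rmap_Rmap)
  then show "bij (Rmap r l)"
    by (metis bijI')
  show "linear (Rmap r l)"
    by (rule linear_Rmap)
  show "ds2 (Rmap r l p) (Rmap r l w) = ds2 p w" for p w
    using unit by (rule ds2_Rmap)
qed

end
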